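(* Let $K\subseteq\mathbb{R}^n$ be a proper polyhedral cone with representation $(H,V)$, let $\mathbf{e}\in\mathrm{int}(K)$, let $A\in\mathbb{R}^{n\times n}$ be $K$-Metzler, and let $c\in\mathbb{R}$. The following are equivalent: (i) $\mu_{\mathbf{e},K}(A)\le c$; (ii) $A\mathbf{e}\preceq_K c\,\mathbf{e}$; (iii) $HA\mathbf{e}\le cH\mathbf{e}$. If additionally $K$ is pointed and $\mathbf{e}^*\in\mathrm{int}(K^* )$, the following are equivalent: (iv) $\mu^{\mathrm{d}}_{\mathbf{e}^*,K^*}(A)\le c$; (v) $A^{\top}\mathbf{e}^*\preceq_{K^*}c\,\mathbf{e}^*$; (vi) $V^{\top}A^{\top}\mathbf{e}^*\le cV^{\top}\mathbf{e}^*$.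
   Context: A cone is a nonempty closed convex set $K\subseteq\mathbb{R}^n$ with $\lambda K\subseteq K$ for $\lambda\ge0$; proper: $\mathrm{int}(K)\ne\emptyset$; pointed: $K\cap(-K)=\{0\}$. Polyhedral with representation $(H,V)$: $K=\{x:Hx\ge0\}=\{Vy:y\ge0\}$. Preorder $x\preceq_K y\iff y-x\in K$; interval $[x,y]_K=\{z:x\preceq_Kz\preceq_Ky\}$. Dual cone $K^*=\{\phi\in\mathbb{R}^n:\langle\phi,x\rangle\ge0\ \forall x\in K\}$. $A$ is $K$-Metzler if $\langle\phi,Av\rangle\ge0$ whenever $\phi\in K^*$, $v\in K$, $\langle\phi,v\rangle=0$. Gauge seminorm: $\|v\|_{\mathbf{e},K}=\inf\{\lambda\ge0:v\in\lambda[-\mathbf{e},\mathbf{e}]_K\}$; dual gauge norm: $\|v\|^{\mathrm{d}}_{\mathbf{e}^*,K^*}=\max\{|\langle\eta,v\rangle|:\eta\in[-\mathbf{e}^*,\mathbf{e}^*]_{K^*}\}$. For a seminorm $|||\cdot|||$ on $\mathbb{R}^n$ with kernel $\mathrm{Ker}=\{x:|||x|||=0\}$, the induced seminorm of a matrix is $|||M|||=\sup\{|||Mx|||:|||x|||=1,\ x\perp\mathrm{Ker}\}$ and the matrix semi-measure is $\mu(M)=\lim_{h\to0^+}(|||I_n+hM|||-1)/h$. $\mu_{\mathbf{e},K}$ denotes the semi-measure of $\|\cdot\|_{\mathbf{e},K}$ and $\mu^{\mathrm{d}}_{\mathbf{e}^*,K^*}$ the matrix measure of $\|\cdot\|^{\mathrm{d}}_{\mathbf{e}^*,K^*}$.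 *)

theory Defs
  imports "HOL-Analysis.Analysis"
begin

text \<open>Vectors in R^n are \<open>real^'n\<close>; matrices are \<open>real^'cols^'rows\<close>.\<close>

definition cone_le :: "(real^'n) set \<Rightarrow> real^'n \<Rightarrow> real^'n \<Rightarrow> bool" where
  "cone_le K x y \<longleftrightarrow> y - x \<in> K"

definition cone_interval :: "(real^'n) set \<Rightarrow> real^'n \<Rightarrow> real^'n \<Rightarrow> (real^'n) set" where
  "cone_interval K x y = {z. cone_le K x z \<and> cone_le K z y}"

definition dual_cone :: "(real^'n) set \<Rightarrow> (real^'n) set" where
  "dual_cone K = {\<phi>. \<forall>x\<in>K. 0 \<le> \<phi> \<bullet> x}"

definition K_Metzler :: "(real^'n) set \<Rightarrow> real^'n^'n \<Rightarrow> bool" where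
  "K_Metzler K A \<longleftrightarrow>
     (\<forall>\<phi>\<in>dual_cone K. \<forall>v\<in>K. \<phi> \<bullet> v = 0 \<longrightarrow> 0 \<le> \<phi> \<bullet> (A *v v))"

definition gauge :: "(real^'n) set \<Rightarrow> real^'n \<Rightarrow> real^'n \<Rightarrow> real" where
  "gauge K e v = Inf {l. 0 \<le> l \<and> v \<in> (\<lambda>z. l *\<^sub>R z) ` cone_interval K (-e) e}"

text \<open>Dual gauge norm \<open>\<parallel>v\<parallel>^d_{e*,K*}\<close> (here Ks plays the role of K*).\<close>
definition dual_gauge :: "(real^'n) set \<Rightarrow> real^'n \<Rightarrow> real^'n \<Rightarrow> real" where
  "dual_gauge Ks es v = Sup {\<bar>\<eta> \<bullet> v\<bar> | \<eta>. \<eta> \<in> cone_interval Ks (-es) es}"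

definition seminorm_kernel :: "(real^'n \<Rightarrow> real) \<Rightarrow> (real^'n) set" where
  "seminorm_kernel N = {x. N x = 0}"

text \<open>Induced seminorm of a matrix, taken in the extended reals
  (the supremum of the empty set is -\<infinity>; this only matters in the degenerate case Ker = R^n).\<close>
definition induced_seminorm :: "(real^'n \<Rightarrow> real) \<Rightarrow> real^'n^'n \<Rightarrow> ereal" where
  "induced_seminorm N M =
     Sup {ereal (N (M *v x)) | x. N x = 1 \<and> (\<forall>k\<in>seminorm_kernel N. x \<bullet> k = 0)}"

definition semi_measure :: "(real^'n \<Rightarrow> real) \<Rightarrow> real^'n^'n \<Rightarrow> ereal" where
  "semi_measure N M =
     Lim (at_right (0::real)) (\<lambda>h. (induced_seminorm N (mat 1 + h *\<^sub>R M) - 1) / ereal h)"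

end

theory Submission
  imports Defs
begin

text \<open>
  For \<open>K = {x. H x \<ge> 0}\<close> with \<open>e\<close> interior, the gauge of \<open>K\<close> is the weighted maximum norm
  \<open>max\<^sub>i \<bar>(H v)\<^sub>i\<bar> / (H e)\<^sub>i\<close>. Since \<open>A\<close> is \<open>K\<close>-Metzler, \<open>I + h A\<close> leaves \<open>K\<close> invariant
  for small \<open>h > 0\<close>, and the induced seminorm of a \<open>K\<close>-positive map \<open>P\<close> is the gauge of \<open>P e\<close>
  (every \<open>x\<close> of gauge at most 1 lies in \<open>[-e, e]\<^sub>K\<close>). So \<open>|||I + h A||| = 1 + h m\<close>, where \<open>m\<close>
  is the largest ratio \<open>(H A e)\<^sub>i / (H e)\<^sub>i\<close> over the rows with \<open>(H e)\<^sub>i > 0\<close>, whence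
  \<open>\<mu>(A) = m\<close> and \<open>m \<le> c\<close> is (iii).

  Dually \<open>K\<^sup>* = {\<phi>. V\<^sup>T \<phi> \<ge> 0}\<close>, the dual gauge equals \<open>\<langle>e\<^sup>*, x\<rangle>\<close> on \<open>K\<close>, and the induced
  norm of a \<open>K\<close>-positive \<open>P\<close> is the weighted maximum norm of \<open>P\<^sup>T e\<^sup>*\<close> with respect to \<open>V\<^sup>T\<close>:
  \<open>P\<^sup>T\<close> maps the dual interval into a multiple of itself, and the bound is attained at the
  generator of \<open>K\<close> realising the maximum. The same computation then gives (iv) \<open>\<longleftrightarrow>\<close> (vi).
\<close>

section \<open>Weighted maximum norms\<close>

definition row_order_unit :: "real^'n^'m \<Rightarrow> real^'n \<Rightarrow> bool" where
  "row_order_unit B u \<longleftrightarrow> (\<forall>i. 0 \<le> (B *v u)$i \<and> ((B *v u)$i = 0 \<longrightarrow> B$i = 0))"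

text \<open>Rows with \<open>(B u)\<^sub>i = 0\<close> contribute \<open>0\<close> to the maximum (division by zero); for a row
  order unit these are zero rows of \<open>B\<close>, so nothing is lost.\<close>
definition row_gauge :: "real^'n^'m \<Rightarrow> real^'n \<Rightarrow> real^'n \<Rightarrow> real" where
  "row_gauge B u z = (MAX i. \<bar>(B *v z)$i\<bar> / (B *v u)$i)"

definition max_row_ratio :: "real^'n^'m \<Rightarrow> real^'n \<Rightarrow> real^'n \<Rightarrow> real" where
  "max_row_ratio B u w = Max ((\<lambda>i. (B *v w)$i / (B *v u)$i) ` {i. 0 < (B *v u)$i})"

lemma row_order_unit_nonneg: "row_order_unit B u \<Longrightarrow> 0 \<le> (B *v u)$i"
  by (simp add: row_order_unit_def)

lemma row_order_unit_zero_row: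
  assumes "row_order_unit B u" "(B *v u)$i = 0"
  shows "(B *v z)$i = 0"
proof -
  have "B$i = 0" using assms by (simp add: row_order_unit_def)
  then show ?thesis by (simp add: matrix_vector_mul_component)
qed

lemma row_gauge_ge: "\<bar>(B *v z)$i\<bar> / (B *v u)$i \<le> row_gauge B u z"
  unfolding row_gauge_def by (rule Max_ge) auto

lemma row_gauge_le_iff:
  assumes u: "row_order_unit B u" and l: "0 \<le> l"
  shows "row_gauge B u z \<le> l \<longleftrightarrow> (\<forall>i. \<bar>(B *v z)$i\<bar> \<le> l * (B *v u)$i)"
proof -
  have "\<bar>(B *v z)$i\<bar> / (B *v u)$i \<le> l \<longleftrightarrow> \<bar>(B *v z)$i\<bar> \<le> l * (B *v u)$i" for i
  proof (cases "(B *v u)$i = 0")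
    case True
    then show ?thesis using l row_order_unit_zero_row[OF u] by simp
  next
    case False
    then have "0 < (B *v u)$i" using row_order_unit_nonneg[OF u, of i] by linarith
    then show ?thesis by (simp add: pos_divide_le_eq)
  qed
  then show ?thesis unfolding row_gauge_def by simp
qed

lemma row_gauge_nonneg: "row_order_unit B u \<Longrightarrow> 0 \<le> row_gauge B u z"
  using row_gauge_ge[of B z _ u] row_order_unit_nonneg
  by (meson abs_ge_zero divide_nonneg_nonneg order_trans)

lemma row_gauge_bound:
  "row_order_unit B u \<Longrightarrow> \<bar>(B *v z)$i\<bar> \<le> row_gauge B u z * (B *v u)$i"
  using row_gauge_le_iff[OF _ row_gauge_nonneg] by blast

lemma row_gauge_attained:
  obtains i where "row_gauge B u z = \<bar>(B *v z)$i\<bar> / (B *v u)$i"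
proof -
  have "row_gauge B u z \<in> range (\<lambda>i. \<bar>(B *v z)$i\<bar> / (B *v u)$i)"
    unfolding row_gauge_def by (intro Max_in) auto
  then show ?thesis using that by blast
qed

lemma row_gauge_self:
  assumes u: "row_order_unit B u" and pos: "\<exists>i. 0 < (B *v u)$i"
  shows "row_gauge B u u = 1"
proof (rule antisym)
  show "row_gauge B u u \<le> 1" using row_gauge_le_iff[OF u, of 1] row_order_unit_nonneg[OF u] by simp
  obtain i where "0 < (B *v u)$i" using pos ..
  then show "1 \<le> row_gauge B u u" using row_gauge_ge[of B u i u] by simp
qed


lemma max_row_ratio_attained:
  assumes "\<exists>i. 0 < (B *v u)$i"
  obtains i where "0 < (B *v u)$i" "(B *v w)$i = max_row_ratio B u w * (B *v u)$i"
proof -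
  have "max_row_ratio B u w \<in> (\<lambda>i. (B *v w)$i / (B *v u)$i) ` {i. 0 < (B *v u)$i}"
    unfolding max_row_ratio_def using assms by (intro Max_in) auto
  then show ?thesis using that by auto
qed

lemma max_row_ratio_le_iff:
  assumes u: "row_order_unit B u" and pos: "\<exists>i. 0 < (B *v u)$i"
  shows "max_row_ratio B u w \<le> c \<longleftrightarrow> (\<forall>i. (B *v w)$i \<le> c * (B *v u)$i)"
proof -
  have "(0 < (B *v u)$i \<longrightarrow> (B *v w)$i / (B *v u)$i \<le> c) \<longleftrightarrow> (B *v w)$i \<le> c * (B *v u)$i" for i
    using row_order_unit_nonneg[OF u, of i] row_order_unit_zero_row[OF u, of i]
    by (cases "(B *v u)$i = 0") (auto simp: pos_divide_le_eq)
  then show ?thesis unfolding max_row_ratio_def using pos by simp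
qed

lemma eventually_at_right_affine_pos:
  fixes a b :: real
  assumes "0 < a"
  shows "eventually (\<lambda>h. 0 < a + h * b) (at_right 0)"
proof -
  have "((\<lambda>h. a + h * b) \<longlongrightarrow> a + 0 * b) (at_right 0)" by (intro tendsto_intros)
  then show ?thesis using assms by (intro order_tendstoD(1)) auto
qed

lemma eventually_at_right_affine_nonneg:
  fixes a b :: real
  assumes "0 \<le> a" and "a = 0 \<Longrightarrow> 0 \<le> b"
  shows "eventually (\<lambda>h. 0 \<le> a + h * b) (at_right 0)"
proof (cases "a = 0")
  case True
  then show ?thesis using assms(2) eventually_at_right_less[of 0] by (auto elim: eventually_mono)
next
  case False
  then show ?thesis using assms(1) eventually_at_right_affine_pos[of a b]
    by (auto elim: eventually_mono)
qed

lemma row_gauge_add_eventually: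
  assumes u: "row_order_unit B u" and pos: "\<exists>i. 0 < (B *v u)$i"
  shows "eventually (\<lambda>h. row_gauge B u (u + h *\<^sub>R w) = 1 + h * max_row_ratio B u w) (at_right 0)"
proof -
  let ?m = "max_row_ratio B u w"
  obtain i0 where i0: "0 < (B *v u)$i0" "(B *v w)$i0 = ?m * (B *v u)$i0"
    using max_row_ratio_attained[OF pos] .
  have below: "(B *v w)$i \<le> ?m * (B *v u)$i" for i
    using max_row_ratio_le_iff[OF u pos] by blast
  have comp: "(B *v (u + h *\<^sub>R w))$i = (B *v u)$i + h * (B *v w)$i" for h i
    by (simp add: matrix_vector_right_distrib matrix_vector_mult_scaleR)
  have "eventually (\<lambda>h. 0 < (B *v u)$i \<longrightarrow> 0 < (B *v u)$i + h * (B *v w)$i) (at_right 0)" for i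
    using eventually_at_right_affine_pos[of "(B *v u)$i" "(B *v w)$i"]
    by (cases "0 < (B *v u)$i") (auto elim: eventually_mono)
  then have "eventually (\<lambda>h. \<forall>i. 0 < (B *v u)$i \<longrightarrow> 0 < (B *v u)$i + h * (B *v w)$i) (at_right 0)"
    by (intro eventually_all_finite) blast
  with eventually_at_right_less[of 0] show ?thesis
  proof eventually_elim
    case (elim h)
    then have "0 < (B *v u)$i0 + h * (B *v w)$i0" using i0(1) by blast
    then have "0 < (1 + h * ?m) * (B *v u)$i0" using i0(2) by (simp add: algebra_simps)
    then have nn: "0 \<le> 1 + h * ?m" using i0(1) by (simp add: zero_less_mult_iff)
    have "\<bar>(B *v (u + h *\<^sub>R w))$i\<bar> \<le> (1 + h * ?m) * (B *v u)$i" for i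
    proof (cases "0 < (B *v u)$i")
      case True
      have "h * (B *v w)$i \<le> h * (?m * (B *v u)$i)" using elim(1) below by (simp add: mult_left_mono)
      moreover have "0 < (B *v u)$i + h * (B *v w)$i" using elim(2) True by blast
      ultimately show ?thesis by (simp add: comp algebra_simps)
    next
      case False
      then show ?thesis using row_order_unit_nonneg[OF u, of i] row_order_unit_zero_row[OF u]
        by (simp add: comp)
    qed
    then have le: "row_gauge B u (u + h *\<^sub>R w) \<le> 1 + h * ?m" using row_gauge_le_iff[OF u nn] by blast
    have "(B *v (u + h *\<^sub>R w))$i0 = (1 + h * ?m) * (B *v u)$i0"
      using i0(2) by (simp add: comp algebra_simps)
    then have "\<bar>(B *v (u + h *\<^sub>R w))$i0\<bar> / (B *v u)$i0 = 1 + h * ?m"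
      using nn i0(1) by (simp add: abs_mult)
    then show ?case using le row_gauge_ge[of B "u + h *\<^sub>R w" i0 u] by linarith
  qed
qed

section \<open>Matrix semi-measures\<close>

lemma semi_measure_eqI:
  assumes "eventually (\<lambda>h. induced_seminorm N (mat 1 + h *\<^sub>R A) = ereal (1 + h * m)) (at_right 0)"
  shows "semi_measure N A = ereal m"
proof -
  have "eventually (\<lambda>h. (induced_seminorm N (mat 1 + h *\<^sub>R A) - 1) / ereal h = ereal m) (at_right 0)"
    using assms eventually_at_right_less[of 0]
    by eventually_elim (simp add: one_ereal_def)
  then show ?thesis
    unfolding semi_measure_def by (intro tendsto_Lim tendsto_eventually) simp_all
qed

lemma semi_measure_zero_seminorm:
  assumes "\<And>v. N v = 0"
  shows "semi_measure N A = - \<infinity>"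
proof -
  have empty: "induced_seminorm N P = - \<infinity>" for P
    unfolding induced_seminorm_def assms by (simp add: bot_ereal_def)
  from eventually_at_right_less[of 0]
  have "eventually (\<lambda>h. (induced_seminorm N (mat 1 + h *\<^sub>R A) - 1) / ereal h = - \<infinity>) (at_right 0)"
    by eventually_elim (simp add: empty one_ereal_def divide_ereal_def)
  then show ?thesis
    unfolding semi_measure_def by (intro tendsto_Lim tendsto_eventually) simp_all
qed

section \<open>Polyhedral cones\<close>

lemma inner_eq_0_interior_imp_eq_0:
  fixes r u :: "'a::real_inner"
  assumes u: "u \<in> interior S" and nonneg: "\<forall>x\<in>S. 0 \<le> r \<bullet> x" and "r \<bullet> u = 0"
  shows "r = 0"
proof (rule ccontr)
  assume r: "r \<noteq> 0"
  obtain \<epsilon> where \<epsilon>: "\<epsilon> > 0" "ball u \<epsilon> \<subseteq> S" using u by (meson mem_interior)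
  define x where "x = u - ((\<epsilon>/2) / norm r) *\<^sub>R r"
  have "dist u x = \<epsilon>/2" using r \<epsilon> by (simp add: x_def dist_norm)
  then have "x \<in> S" using \<epsilon> by auto
  then have "0 \<le> r \<bullet> x" using nonneg by blast
  moreover have "r \<bullet> x = - (\<epsilon>/2) * norm r"
    using \<open>r \<bullet> u = 0\<close> r
    by (simp add: x_def inner_diff_right power2_norm_eq_inner[symmetric] power2_eq_square)
  ultimately show False using r \<epsilon> by (simp add: mult_le_0_iff)
qed

lemma mat_1_plus_scaleR_mult: "(mat 1 + h *\<^sub>R A) *v x = x + h *\<^sub>R (A *v (x::real^'n))"
  by (simp add: matrix_vector_mult_add_rdistrib scaleR_matrix_vector_assoc[symmetric])

lemma transpose_mat_1_plus_scaleR: "transpose (mat 1 + h *\<^sub>R A) = mat 1 + h *\<^sub>R transpose (A::real^'n^'n)"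
  by (simp add: vec_eq_iff transpose_def mat_def)

lemma polyhedral_cone_le_iff:
  assumes "K = {x. \<forall>i. 0 \<le> (H *v x)$i}"
  shows "cone_le K x y \<longleftrightarrow> (\<forall>i. (H *v x)$i \<le> (H *v y)$i)"
  using assms by (simp add: cone_le_def matrix_vector_mult_diff_distrib)

lemma polyhedral_cone_interval_iff:
  assumes "K = {x. \<forall>i. 0 \<le> (H *v x)$i}"
  shows "z \<in> cone_interval K (-e) e \<longleftrightarrow> (\<forall>i. \<bar>(H *v z)$i\<bar> \<le> (H *v e)$i)"
  unfolding cone_interval_def polyhedral_cone_le_iff[OF assms] vec.neg abs_le_iff
  by (smt (verit) mem_Collect_eq neg_le_iff_le vector_uminus_component)

lemma polyhedral_row_order_unit:
  assumes K: "K = {x. \<forall>i. 0 \<le> (H *v x)$i}" and e: "e \<in> interior K"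
  shows "row_order_unit H e"
  unfolding row_order_unit_def
proof (intro allI conjI impI)
  fix i
  show "0 \<le> (H *v e)$i" using K e interior_subset by blast
  assume "(H *v e)$i = 0"
  then show "H$i = 0"
    using K by (intro inner_eq_0_interior_imp_eq_0[OF e]) (auto simp: matrix_vector_mul_component)
qed

lemma cone_interval_image:
  assumes "\<forall>x\<in>K. P *v x \<in> K" and "z \<in> cone_interval K (-e) e"
  shows "P *v z \<in> cone_interval K (- (P *v e)) (P *v e)"
proof -
  have "P *v (z + e) \<in> K" "P *v (e - z) \<in> K"
    using assms by (auto simp: cone_interval_def cone_le_def)
  then show ?thesis
    by (simp add: cone_interval_def cone_le_def matrix_vector_right_distrib
        matrix_vector_mult_diff_distrib)
qed

lemma inner_matrix_vector_transpose: "(transpose P *v \<eta>) \<bullet> x = \<eta> \<bullet> (P *v (x::real^'n))"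
  unfolding transpose_matrix_vector by (rule dot_lmul_matrix)

lemma transpose_matrix_vector_component: "(transpose V *v \<phi>)$j = \<phi> \<bullet> (V *v axis j 1)"
  by (simp only: cart_eq_inner_axis inner_matrix_vector_transpose)

lemma generated_cone_axis:
  fixes V :: "real^'k^'n"
  assumes "K = {V *v y | y. \<forall>j. 0 \<le> y$j}"
  shows "V *v axis j 1 \<in> K"
  unfolding assms by (auto intro!: exI[of _ "axis j 1"] simp: axis_def)

lemma dual_cone_generated:
  fixes V :: "real^'k^'n"
  assumes V: "K = {V *v y | y. \<forall>j. 0 \<le> y$j}"
  shows "dual_cone K = {\<phi>. \<forall>j. 0 \<le> (transpose V *v \<phi>)$j}"
proof -
  have inner: "\<phi> \<bullet> (V *v y) = (\<Sum>j\<in>UNIV. (transpose V *v \<phi>)$j * y$j)" for \<phi> y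
    unfolding inner_matrix_vector_transpose[symmetric] by (simp only: inner_vec_def inner_real_def)
  have "(\<forall>x\<in>K. 0 \<le> \<phi> \<bullet> x) \<longleftrightarrow> (\<forall>j. 0 \<le> (transpose V *v \<phi>)$j)" for \<phi>
  proof
    assume "\<forall>x\<in>K. 0 \<le> \<phi> \<bullet> x"
    then show "\<forall>j. 0 \<le> (transpose V *v \<phi>)$j"
      using generated_cone_axis[OF V] unfolding transpose_matrix_vector_component by blast
  qed (auto simp: V inner intro!: sum_nonneg)
  then show ?thesis by (auto simp: dual_cone_def)
qed

lemma polyhedral_invariant_if_generators:
  fixes H :: "real^'n^'m" and V :: "real^'k^'n"
  assumes H: "K = {x. \<forall>i. 0 \<le> (H *v x)$i}" and V: "K = {V *v y | y. \<forall>j. 0 \<le> y$j}"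
    and gen: "\<forall>j. P *v (V *v axis j 1) \<in> K"
  shows "\<forall>x\<in>K. P *v x \<in> K"
proof
  fix x assume "x \<in> K"
  then obtain y where x: "x = V *v y" and y: "\<forall>j. 0 \<le> y$j" using V by auto
  let ?Q = "H ** P ** V"
  have entry: "?Q$i$j = (H *v (P *v (V *v axis j 1)))$i" for i j
  proof -
    have "?Q$i$j = (?Q *v axis j 1)$i" by (simp add: matrix_vector_mult_basis column_def)
    then show ?thesis by (simp add: matrix_vector_mul_assoc matrix_mul_assoc)
  qed
  have "H *v (P *v x) = ?Q *v y" by (simp add: x matrix_vector_mul_assoc matrix_mul_assoc)
  then have "(H *v (P *v x))$i = (\<Sum>j\<in>UNIV. ?Q$i$j * y$j)" for i
    by (simp add: matrix_vector_mult_def)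
  then have "(H *v (P *v x))$i = (\<Sum>j\<in>UNIV. (H *v (P *v (V *v axis j 1)))$i * y$j)" for i
    by (simp add: entry)
  moreover have "0 \<le> (H *v (P *v (V *v axis j 1)))$i" for i j using gen H by blast
  ultimately have "0 \<le> (H *v (P *v x))$i" for i using y by (simp add: sum_nonneg)
  then show "P *v x \<in> K" using H by blast
qed

lemma positive_map_cone_interval_bound:
  fixes H :: "real^'n^'m"
  assumes K: "K = {x. \<forall>i. 0 \<le> (H *v x)$i}" and u: "row_order_unit H e"
    and P: "\<forall>x\<in>K. P *v x \<in> K" and z: "z \<in> cone_interval K (-e) e"
  shows "\<bar>(H *v (P *v z))$i\<bar> \<le> row_gauge H e (P *v e) * (H *v e)$i"
proof -
  have "P *v z \<in> cone_interval K (- (P *v e)) (P *v e)" by (rule cone_interval_image[OF P z])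
  then show ?thesis
    using row_gauge_bound[OF u, of "P *v e" i] abs_ge_self[of "(H *v (P *v e))$i"]
    unfolding polyhedral_cone_interval_iff[OF K] by (meson order_trans)
qed


lemma polyhedral_row_dual:
  assumes "K = {x. \<forall>i. 0 \<le> (H *v x)$i}"
  shows "H$i \<in> dual_cone K"
  using assms by (simp add: dual_cone_def matrix_vector_mul_component)

lemma K_Metzler_kernel_invariant:
  assumes K: "K = {x. \<forall>i. 0 \<le> (H *v x)$i}" and A: "K_Metzler K A" and y: "H *v y = 0"
  shows "H *v (A *v y) = 0"
proof -
  have "y \<in> K" "-y \<in> K" using K y by (auto simp: vec.neg)
  moreover have "H$i \<bullet> y = 0" "H$i \<bullet> -y = 0" for i
    using y by (simp_all add: matrix_vector_mul_component[symmetric] vec.neg)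
  ultimately have "0 \<le> H$i \<bullet> (A *v y)" "0 \<le> H$i \<bullet> (A *v -y)" for i
    using A polyhedral_row_dual[OF K] unfolding K_Metzler_def by blast+
  then show ?thesis by (simp add: vec_eq_iff matrix_vector_mul_component vec.neg) (meson order.antisym)
qed

lemma K_Metzler_eventually_invariant:
  fixes H :: "real^'n^'m" and V :: "real^'k^'n"
  assumes H: "K = {x. \<forall>i. 0 \<le> (H *v x)$i}" and V: "K = {V *v y | y. \<forall>j. 0 \<le> y$j}"
    and A: "K_Metzler K A"
  shows "eventually (\<lambda>h. \<forall>x\<in>K. (mat 1 + h *\<^sub>R A) *v x \<in> K) (at_right 0)"
proof -
  let ?v = "\<lambda>j. V *v axis j 1"
  have "eventually (\<lambda>h. 0 \<le> (H *v ?v j)$i + h * (H *v (A *v ?v j))$i) (at_right 0)" for i j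
  proof (rule eventually_at_right_affine_nonneg)
    show "0 \<le> (H *v ?v j)$i" using generated_cone_axis[OF V] H by blast
    assume "(H *v ?v j)$i = 0"
    then show "0 \<le> (H *v (A *v ?v j))$i"
      using A polyhedral_row_dual[OF H] generated_cone_axis[OF V]
      unfolding K_Metzler_def by (simp add: matrix_vector_mul_component)
  qed
  then have "eventually (\<lambda>h. \<forall>j i. 0 \<le> (H *v ?v j)$i + h * (H *v (A *v ?v j))$i) (at_right 0)"
    by (intro eventually_all_finite allI)
  then show ?thesis
  proof eventually_elim
    case (elim h)
    then have "\<forall>j. (mat 1 + h *\<^sub>R A) *v ?v j \<in> K"
      using H by (simp add: mat_1_plus_scaleR_mult matrix_vector_right_distrib matrix_vector_mult_scaleR)
    then show ?case by (rule polyhedral_invariant_if_generators[OF H V])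
  qed
qed

section \<open>The gauge seminorm\<close>

lemma gauge_eq_row_gauge:
  fixes H :: "real^'n^'m"
  assumes K: "K = {x. \<forall>i. 0 \<le> (H *v x)$i}" and e: "e \<in> interior K"
  shows "gauge K e v = row_gauge H e v"
proof -
  let ?g = "row_gauge H e v"
  have u: "row_order_unit H e" by (rule polyhedral_row_order_unit[OF K e])
  define S where "S = {l. 0 \<le> l \<and> v \<in> (\<lambda>z. l *\<^sub>R z) ` cone_interval K (-e) e}"
  have pos_iff: "l \<in> S \<longleftrightarrow> ?g \<le> l" if l: "0 < l" for l
  proof -
    have "v \<in> (\<lambda>z. l *\<^sub>R z) ` cone_interval K (-e) e \<longleftrightarrow> (1/l) *\<^sub>R v \<in> cone_interval K (-e) e"
      using l by (auto simp: image_iff intro!: bexI[of _ "(1/l) *\<^sub>R v"])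
    also have "\<dots> \<longleftrightarrow> (\<forall>i. \<bar>(H *v v)$i\<bar> \<le> l * (H *v e)$i)"
      using l by (simp add: polyhedral_cone_interval_iff[OF K] matrix_vector_mult_scaleR abs_mult
          pos_divide_le_eq mult.commute)
    also have "\<dots> \<longleftrightarrow> ?g \<le> l" using row_gauge_le_iff[OF u] l by simp
    finally show ?thesis using l unfolding S_def by auto
  qed
  have lower: "?g \<le> l" if "l \<in> S" for l
  proof (cases "l = 0")
    case True
    then have "v = 0" using that unfolding S_def by auto
    then show ?thesis using True row_gauge_le_iff[OF u, of 0 0] by simp
  next
    case False
    then have "0 < l" using that unfolding S_def by simp
    then show ?thesis using that pos_iff by blast
  qed
  have upper: "l \<in> S" if "?g < l" for l
    using that pos_iff row_gauge_nonneg[OF u, of v] by simp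
  have "Inf S = ?g"
  proof (rule antisym)
    show "Inf S \<le> ?g"
    proof (rule dense_ge)
      fix l assume "?g < l"
      then show "Inf S \<le> l" using lower upper by (intro cInf_lower) (auto simp: bdd_below_def)
    qed
    show "?g \<le> Inf S"
      using lower upper[of "?g + 1"] by (intro cInf_greatest) auto
  qed
  then show ?thesis unfolding gauge_def S_def by simp
qed

lemma gauge_positive_map_le:
  fixes H :: "real^'n^'m"
  assumes K: "K = {x. \<forall>i. 0 \<le> (H *v x)$i}" and e: "e \<in> interior K"
    and P: "\<forall>x\<in>K. P *v x \<in> K" and x: "gauge K e x \<le> 1"
  shows "gauge K e (P *v x) \<le> gauge K e (P *v e)"
proof -
  have u: "row_order_unit H e" by (rule polyhedral_row_order_unit[OF K e])
  have "x \<in> cone_interval K (-e) e"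
    using x row_gauge_le_iff[OF u, of 1]
    by (simp add: gauge_eq_row_gauge[OF K e] polyhedral_cone_interval_iff[OF K])
  then have "\<bar>(H *v (P *v x))$i\<bar> \<le> row_gauge H e (P *v e) * (H *v e)$i" for i
    by (rule positive_map_cone_interval_bound[OF K u P])
  then show ?thesis
    using row_gauge_le_iff[OF u row_gauge_nonneg[OF u]] by (simp add: gauge_eq_row_gauge[OF K e])
qed

lemma induced_seminorm_gauge:
  fixes H :: "real^'n^'m" and P :: "real^'n^'n"
  assumes K: "K = {x. \<forall>i. 0 \<le> (H *v x)$i}" and e: "e \<in> interior K"
    and pos: "\<exists>i. 0 < (H *v e)$i" and P: "\<forall>x\<in>K. P *v x \<in> K"
    and ker: "\<forall>y. H *v y = 0 \<longrightarrow> H *v (P *v y) = 0"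
  shows "induced_seminorm (gauge K e) P = ereal (gauge K e (P *v e))"
proof -
  have u: "row_order_unit H e" by (rule polyhedral_row_order_unit[OF K e])
  have g: "gauge K e = row_gauge H e" using gauge_eq_row_gauge[OF K e] by blast
  have "gauge K e x = 0 \<longleftrightarrow> H *v x = 0" for x
    using row_gauge_le_iff[OF u order_refl, of x] row_gauge_nonneg[OF u, of x]
    by (auto simp: g vec_eq_iff)
  then have kernel: "seminorm_kernel (gauge K e) = {x. H *v x = 0}"
    by (auto simp: seminorm_kernel_def)
  have "subspace {x. H *v x = 0}"
    by (auto simp: subspace_def matrix_vector_right_distrib matrix_vector_mult_scaleR)
  then have span: "span {x. H *v x = 0} = {x. H *v x = 0}" by (simp only: span_eq_iff)
  \<comment> \<open>\<open>e\<close> itself need not be orthogonal to the kernel; its orthogonal component \<open>z\<close> is.\<close>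
  obtain y z where y: "y \<in> span {x. H *v x = 0}"
    and z: "\<And>w. w \<in> span {x. H *v x = 0} \<Longrightarrow> orthogonal z w" and ez: "e = y + z"
    using orthogonal_subspace_decomp_exists[of "{x. H *v x = 0}" e] by blast
  have Hy: "H *v y = 0" using y span by auto
  have "H *v z = H *v e" using ez Hy by (simp add: matrix_vector_right_distrib)
  then have z_unit: "gauge K e z = 1" using row_gauge_self[OF u pos] by (simp add: g row_gauge_def)
  have z_perp: "\<forall>k\<in>seminorm_kernel (gauge K e). z \<bullet> k = 0"
    using z span kernel by (auto simp: orthogonal_def)
  have "H *v (P *v z) = H *v (P *v e)" using ez ker Hy by (simp add: matrix_vector_right_distrib)
  then have Pz: "gauge K e (P *v z) = gauge K e (P *v e)" by (simp add: g row_gauge_def)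
  define T where "T = {ereal (gauge K e (P *v x)) | x. gauge K e x = 1
      \<and> (\<forall>k\<in>seminorm_kernel (gauge K e). x \<bullet> k = 0)}"
  have "Sup T = ereal (gauge K e (P *v e))"
  proof (rule antisym)
    show "Sup T \<le> ereal (gauge K e (P *v e))"
      using gauge_positive_map_le[OF K e P] by (intro Sup_least) (auto simp: T_def)
    have "ereal (gauge K e (P *v z)) \<in> T" unfolding T_def using z_unit z_perp by blast
    then have "ereal (gauge K e (P *v e)) \<in> T" by (simp only: Pz)
    then show "ereal (gauge K e (P *v e)) \<le> Sup T" by (rule Sup_upper)
  qed
  then show ?thesis unfolding induced_seminorm_def T_def .
qed

lemma semi_measure_gauge_le_iff:
  fixes H :: "real^'n^'m" and V :: "real^'k^'n"
  assumes H: "K = {x. \<forall>i. 0 \<le> (H *v x)$i}" and V: "K = {V *v y | y. \<forall>j. 0 \<le> y$j}"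
    and e: "e \<in> interior K" and A: "K_Metzler K A"
  shows "semi_measure (gauge K e) A \<le> ereal c \<longleftrightarrow> (\<forall>i. (H *v (A *v e))$i \<le> c * (H *v e)$i)"
proof (cases "\<exists>i. 0 < (H *v e)$i")
  case True
  have u: "row_order_unit H e" by (rule polyhedral_row_order_unit[OF H e])
  have "eventually (\<lambda>h. induced_seminorm (gauge K e) (mat 1 + h *\<^sub>R A)
      = ereal (1 + h * max_row_ratio H e (A *v e))) (at_right 0)"
    using K_Metzler_eventually_invariant[OF H V A] row_gauge_add_eventually[OF u True, of "A *v e"]
  proof eventually_elim
    case (elim h)
    have "\<forall>y. H *v y = 0 \<longrightarrow> H *v ((mat 1 + h *\<^sub>R A) *v y) = 0"
      using K_Metzler_kernel_invariant[OF H A]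
      by (simp add: mat_1_plus_scaleR_mult matrix_vector_right_distrib matrix_vector_mult_scaleR)
    then show ?case
      using induced_seminorm_gauge[OF H e True elim(1)] elim(2)
      by (simp add: mat_1_plus_scaleR_mult gauge_eq_row_gauge[OF H e])
  qed
  then show ?thesis using max_row_ratio_le_iff[OF u True] by (simp add: semi_measure_eqI)
next
  case False
  then have "(H *v e)$i = 0" for i
    using row_order_unit_nonneg[OF polyhedral_row_order_unit[OF H e], of i]
    by (meson antisym not_le)
  then have H0: "(H *v v)$i = 0" for v i using polyhedral_row_order_unit[OF H e] row_order_unit_zero_row
    by blast
  then have "gauge K e v = 0" for v by (simp add: gauge_eq_row_gauge[OF H e] row_gauge_def)
  then have "semi_measure (gauge K e) A = - \<infinity>" by (rule semi_measure_zero_seminorm)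
  then show ?thesis using H0 by simp
qed

section \<open>The dual gauge norm\<close>

lemma cone_interval_symmetric_iff:
  "\<eta> \<in> cone_interval Ks (-es) es \<longleftrightarrow> es + \<eta> \<in> Ks \<and> es - \<eta> \<in> Ks"
  by (simp add: cone_interval_def cone_le_def add.commute)

lemma dual_cone_interval_bound:
  assumes "\<eta> \<in> cone_interval (dual_cone K) (-es) es" and "x \<in> K"
  shows "\<bar>\<eta> \<bullet> x\<bar> \<le> es \<bullet> x"
proof -
  have "0 \<le> (es + \<eta>) \<bullet> x" "0 \<le> (es - \<eta>) \<bullet> x"
    using assms by (auto simp: cone_interval_symmetric_iff dual_cone_def)
  then show ?thesis by (simp add: inner_add_left inner_diff_left abs_le_iff)
qed

lemma dual_cone_interval_bdd_above:
  assumes e: "e \<in> interior K"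
  shows "bdd_above {\<bar>\<eta> \<bullet> v\<bar> | \<eta>. \<eta> \<in> cone_interval (dual_cone K) (-es) es}"
proof -
  obtain \<delta> where \<delta>: "\<delta> > 0" "ball e \<delta> \<subseteq> K" using e by (meson mem_interior)
  define s where "s = (\<delta> / 2) / (norm v + 1)"
  have den: "0 < norm v + 1" by (smt (verit) norm_ge_zero)
  then have s: "0 < s" using \<delta>(1) by (simp add: s_def)
  have "s * norm v \<le> s * (norm v + 1)" using s by simp
  also have "\<dots> = \<delta> / 2" using den by (simp add: s_def field_simps)
  also have "\<dots> < \<delta>" using \<delta>(1) by simp
  finally have K: "e + s *\<^sub>R v \<in> K" "e - s *\<^sub>R v \<in> K" using \<delta> s by (auto simp: dist_norm)
  have "\<bar>\<eta> \<bullet> v\<bar> \<le> (es \<bullet> e) / s" if "\<eta> \<in> cone_interval (dual_cone K) (-es) es" for \<eta>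
  proof -
    have "\<bar>\<eta> \<bullet> e + s * (\<eta> \<bullet> v)\<bar> \<le> es \<bullet> e + s * (es \<bullet> v)"
      "\<bar>\<eta> \<bullet> e - s * (\<eta> \<bullet> v)\<bar> \<le> es \<bullet> e - s * (es \<bullet> v)"
      using dual_cone_interval_bound[OF that K(1)] dual_cone_interval_bound[OF that K(2)]
      by (simp_all add: inner_add_right inner_diff_right)
    then have "s * \<bar>\<eta> \<bullet> v\<bar> \<le> es \<bullet> e" using s by (simp add: abs_le_iff abs_mult) linarith
    then show ?thesis using s by (simp add: pos_le_divide_eq mult.commute)
  qed
  then show ?thesis unfolding bdd_above_def by blast
qed

lemma dual_gauge_ge:
  assumes "e \<in> interior K" and "\<eta> \<in> cone_interval (dual_cone K) (-es) es"
  shows "\<bar>\<eta> \<bullet> v\<bar> \<le> dual_gauge (dual_cone K) es v"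
  unfolding dual_gauge_def using assms by (intro cSup_upper dual_cone_interval_bdd_above) auto

lemma dual_gauge_le:
  assumes "es \<in> dual_cone K" and "\<forall>\<eta>\<in>cone_interval (dual_cone K) (-es) es. \<bar>\<eta> \<bullet> v\<bar> \<le> b"
  shows "dual_gauge (dual_cone K) es v \<le> b"
proof -
  have "0 \<in> cone_interval (dual_cone K) (-es) es" using assms(1) by (simp add: cone_interval_symmetric_iff)
  then show ?thesis unfolding dual_gauge_def using assms(2) by (intro cSup_least) auto
qed

lemma self_mem_dual_cone_interval:
  "es \<in> dual_cone K \<Longrightarrow> es \<in> cone_interval (dual_cone K) (-es) es"
  unfolding cone_interval_symmetric_iff dual_cone_def mem_Collect_eq inner_add_left by simp

lemma dual_gauge_cone:
  assumes e: "e \<in> interior K" and es: "es \<in> dual_cone K" and x: "x \<in> K"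
  shows "dual_gauge (dual_cone K) es x = es \<bullet> x"
proof (rule antisym)
  show "dual_gauge (dual_cone K) es x \<le> es \<bullet> x"
    using dual_cone_interval_bound x by (intro dual_gauge_le[OF es]) auto
  show "es \<bullet> x \<le> dual_gauge (dual_cone K) es x"
    using dual_gauge_ge[OF e self_mem_dual_cone_interval[OF es], of x] by simp
qed

lemma seminorm_kernel_dual_gauge:
  assumes e: "e \<in> interior K" and es: "es \<in> interior (dual_cone K)"
  shows "seminorm_kernel (dual_gauge (dual_cone K) es) = {0}"
proof -
  have "k = 0" if k: "dual_gauge (dual_cone K) es k = 0" for k
  proof (rule ccontr)
    assume "k \<noteq> 0"
    obtain \<epsilon> where \<epsilon>: "\<epsilon> > 0" "ball es \<epsilon> \<subseteq> dual_cone K" using es by (meson mem_interior)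
    define \<eta> where "\<eta> = ((\<epsilon>/2) / norm k) *\<^sub>R k"
    have "norm \<eta> = \<epsilon>/2" using \<open>k \<noteq> 0\<close> \<epsilon> by (simp add: \<eta>_def)
    then have "es + \<eta> \<in> dual_cone K" "es - \<eta> \<in> dual_cone K" using \<epsilon> by (auto simp: dist_norm)
    then have "\<bar>\<eta> \<bullet> k\<bar> \<le> 0" using dual_gauge_ge[OF e] k by (metis cone_interval_symmetric_iff)
    moreover have "\<eta> \<bullet> k = (\<epsilon>/2) * norm k"
      using \<open>k \<noteq> 0\<close> by (simp add: \<eta>_def power2_norm_eq_inner[symmetric] power2_eq_square)
    ultimately show False using \<open>k \<noteq> 0\<close> \<epsilon>(1) by (simp add: mult_le_0_iff)
  qed
  moreover have "dual_gauge (dual_cone K) es 0 = 0"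
    using dual_gauge_le[of es K 0 0] dual_gauge_ge[OF e, of 0 es 0] es interior_subset
    by (force simp: cone_interval_symmetric_iff)
  ultimately show ?thesis by (auto simp: seminorm_kernel_def)
qed

lemma dual_cone_transpose_invariant:
  "\<forall>x\<in>K. P *v x \<in> K \<Longrightarrow> \<forall>\<phi>\<in>dual_cone K. transpose P *v \<phi> \<in> dual_cone K"
  by (auto simp: dual_cone_def inner_matrix_vector_transpose simp del: transpose_matrix_vector)

lemma dual_gauge_positive_map_le:
  fixes V :: "real^'k^'n" and P :: "real^'n^'n"
  assumes V: "K = {V *v y | y. \<forall>j. 0 \<le> y$j}"
    and e: "e \<in> interior K" and es: "es \<in> interior (dual_cone K)"
    and P: "\<forall>x\<in>K. P *v x \<in> K"
    and pos: "0 < row_gauge (transpose V) es (transpose P *v es)"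
    and x: "dual_gauge (dual_cone K) es x \<le> 1"
  shows "dual_gauge (dual_cone K) es (P *v x) \<le> row_gauge (transpose V) es (transpose P *v es)"
proof -
  let ?lam = "row_gauge (transpose V) es (transpose P *v es)"
  have Ks: "dual_cone K = {\<phi>. \<forall>j. 0 \<le> (transpose V *v \<phi>)$j}" by (rule dual_cone_generated[OF V])
  have u: "row_order_unit (transpose V) es" by (rule polyhedral_row_order_unit[OF Ks es])
  have esK: "es \<in> dual_cone K" using es interior_subset by blast
  show ?thesis
  proof (rule dual_gauge_le[OF esK], rule ballI)
    fix \<eta> assume \<eta>: "\<eta> \<in> cone_interval (dual_cone K) (-es) es"
    define \<eta>' where "\<eta>' = (1 / ?lam) *\<^sub>R (transpose P *v \<eta>)"
    have "\<bar>(transpose V *v (transpose P *v \<eta>))$j\<bar> \<le> ?lam * (transpose V *v es)$j" for j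
      by (rule positive_map_cone_interval_bound[OF Ks u dual_cone_transpose_invariant[OF P] \<eta>])
    then have "\<eta>' \<in> cone_interval (dual_cone K) (-es) es"
      using pos by (simp add: polyhedral_cone_interval_iff[OF Ks] \<eta>'_def matrix_vector_mult_scaleR
          abs_mult pos_divide_le_eq mult.commute)
    then have "\<bar>\<eta>' \<bullet> x\<bar> \<le> 1" using dual_gauge_ge[OF e] x by (meson order_trans)
    moreover have "\<eta> \<bullet> (P *v x) = ?lam * (\<eta>' \<bullet> x)"
      using pos by (simp add: \<eta>'_def dot_lmul_matrix)
    ultimately show "\<bar>\<eta> \<bullet> (P *v x)\<bar> \<le> ?lam" using pos by (simp add: abs_mult)
  qed
qed

lemma induced_seminorm_dual_gauge:
  fixes V :: "real^'k^'n" and P :: "real^'n^'n"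
  assumes V: "K = {V *v y | y. \<forall>j. 0 \<le> y$j}"
    and e: "e \<in> interior K" and es: "es \<in> interior (dual_cone K)"
    and P: "\<forall>x\<in>K. P *v x \<in> K"
    and pos: "0 < row_gauge (transpose V) es (transpose P *v es)"
  shows "induced_seminorm (dual_gauge (dual_cone K) es) P
    = ereal (row_gauge (transpose V) es (transpose P *v es))"
proof -
  let ?N = "dual_gauge (dual_cone K) es"
  let ?lam = "row_gauge (transpose V) es (transpose P *v es)"
  have u: "row_order_unit (transpose V) es"
    using polyhedral_row_order_unit[OF dual_cone_generated[OF V] es] .
  have esK: "es \<in> dual_cone K" using es interior_subset by blast
  obtain j where j: "?lam = \<bar>(transpose V *v (transpose P *v es))$j\<bar> / (transpose V *v es)$j"
    by (rule row_gauge_attained)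
  define q where "q = (transpose V *v es)$j"
  have "q \<noteq> 0" using pos j by (auto simp: q_def)
  then have q: "0 < q" using row_order_unit_nonneg[OF u, of j] by (simp add: q_def)
  have q_eq: "q = es \<bullet> (V *v axis j 1)" unfolding q_def by (rule transpose_matrix_vector_component)
  \<comment> \<open>The witness is the extreme ray of \<open>K\<close> on which the maximum defining \<open>\<lambda>\<close> is attained.\<close>
  define x where "x = (1 / q) *\<^sub>R (V *v axis j 1)"
  have "x = V *v ((1 / q) *\<^sub>R axis j 1)" by (simp add: x_def matrix_vector_mult_scaleR)
  then have "x \<in> K" using V q by (auto simp: axis_def)
  then have x_unit: "?N x = 1" using dual_gauge_cone[OF e esK] q q_eq by (simp add: x_def)
  have x_perp: "\<forall>k\<in>seminorm_kernel ?N. x \<bullet> k = 0"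
    using seminorm_kernel_dual_gauge[OF e es] by simp
  define T where "T = {ereal (?N (P *v x)) | x. ?N x = 1 \<and> (\<forall>k\<in>seminorm_kernel ?N. x \<bullet> k = 0)}"
  have "es \<bullet> (P *v x) = (transpose P *v es) \<bullet> x" by (rule inner_matrix_vector_transpose[symmetric])
  also have "\<dots> = ((transpose P *v es) \<bullet> (V *v axis j 1)) / q"
    by (simp add: x_def del: transpose_matrix_vector)
  also have "\<dots> = (transpose V *v (transpose P *v es))$j / q"
    by (simp only: transpose_matrix_vector_component)
  finally have "\<bar>es \<bullet> (P *v x)\<bar> = ?lam" using j q by (simp add: q_def)
  then have "?lam \<le> ?N (P *v x)" using dual_gauge_ge[OF e self_mem_dual_cone_interval[OF esK]] by metis
  moreover have "ereal (?N (P *v x)) \<in> T" unfolding T_def using x_unit x_perp by blast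
  ultimately have "ereal ?lam \<le> Sup T" by (meson Sup_upper ereal_less_eq(3) order_trans)
  moreover have "Sup T \<le> ereal ?lam"
    using dual_gauge_positive_map_le[OF V e es P pos] by (intro Sup_least) (auto simp: T_def)
  ultimately show ?thesis unfolding induced_seminorm_def T_def by simp
qed

lemma semi_measure_dual_gauge_le_iff:
  fixes H :: "real^'n^'m" and V :: "real^'k^'n"
  assumes H: "K = {x. \<forall>i. 0 \<le> (H *v x)$i}" and V: "K = {V *v y | y. \<forall>j. 0 \<le> y$j}"
    and e: "e \<in> interior K" and A: "K_Metzler K A" and es: "es \<in> interior (dual_cone K)"
  shows "semi_measure (dual_gauge (dual_cone K) es) A \<le> ereal c
    \<longleftrightarrow> (\<forall>j. (transpose V *v (transpose A *v es))$j \<le> c * (transpose V *v es)$j)"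
proof -
  have Ks: "dual_cone K = {\<phi>. \<forall>j. 0 \<le> (transpose V *v \<phi>)$j}" by (rule dual_cone_generated[OF V])
  have u: "row_order_unit (transpose V) es" by (rule polyhedral_row_order_unit[OF Ks es])
  have pos: "\<exists>j. 0 < (transpose V *v es)$j"
  proof (rule ccontr)
    assume "\<not> ?thesis"
    then have "(transpose V *v es)$j = 0" for j
      using row_order_unit_nonneg[OF u, of j] by (meson antisym not_le)
    then have "transpose V = transpose 0" using u by (simp add: row_order_unit_def vec_eq_iff transpose_def)
    then have "K = {0}" using V by (auto intro!: exI[of _ 0])
    then show False using e by simp
  qed
  let ?m = "max_row_ratio (transpose V) es (transpose A *v es)"
  have "eventually (\<lambda>h. induced_seminorm (dual_gauge (dual_cone K) es) (mat 1 + h *\<^sub>R A)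
      = ereal (1 + h * ?m)) (at_right 0)"
    using K_Metzler_eventually_invariant[OF H V A]
      row_gauge_add_eventually[OF u pos, of "transpose A *v es"]
      eventually_at_right_affine_pos[OF zero_less_one, of ?m]
  proof eventually_elim
    case (elim h)
    then show ?case
      using induced_seminorm_dual_gauge[OF V e es elim(1)]
      by (simp add: transpose_mat_1_plus_scaleR mat_1_plus_scaleR_mult)
  qed
  then show ?thesis using max_row_ratio_le_iff[OF u pos] by (simp add: semi_measure_eqI)
qed

theorem theorem1:
  fixes K :: "(real^'n) set" and H :: "real^'n^'m" and V :: "real^'k^'n"
    and e :: "real^'n" and A :: "real^'n^'n" and c :: real
  assumes H_rep: "K = {x. \<forall>i. 0 \<le> (H *v x) $ i}"
    and V_rep: "K = {V *v y | y. \<forall>j. 0 \<le> y $ j}"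
    and proper: "interior K \<noteq> {}"
    and e_int: "e \<in> interior K"
    and metzler: "K_Metzler K A"
  shows "(semi_measure (gauge K e) A \<le> ereal c \<longleftrightarrow> cone_le K (A *v e) (c *\<^sub>R e))
       \<and> (cone_le K (A *v e) (c *\<^sub>R e) \<longleftrightarrow> (\<forall>i. (H *v (A *v e)) $ i \<le> c * (H *v e) $ i))
       \<and> (\<forall>es. K \<inter> uminus ` K = {0} \<longrightarrow> es \<in> interior (dual_cone K) \<longrightarrow>
            ((semi_measure (dual_gauge (dual_cone K) es) A \<le> ereal c
                \<longleftrightarrow> cone_le (dual_cone K) (transpose A *v es) (c *\<^sub>R es))
           \<and> (cone_le (dual_cone K) (transpose A *v es) (c *\<^sub>R es)
                \<longleftrightarrow> (\<forall>j. (transpose V *v (transpose A *v es)) $ j \<le> c * (transpose V *v es) $ j))))"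
proof -
  have primal: "cone_le K (A *v e) (c *\<^sub>R e) \<longleftrightarrow> (\<forall>i. (H *v (A *v e)) $ i \<le> c * (H *v e) $ i)"
    by (simp add: polyhedral_cone_le_iff[OF H_rep] matrix_vector_mult_scaleR)
  have dual: "cone_le (dual_cone K) (transpose A *v es) (c *\<^sub>R es)
      \<longleftrightarrow> (\<forall>j. (transpose V *v (transpose A *v es)) $ j \<le> c * (transpose V *v es) $ j)" for es
    by (simp add: polyhedral_cone_le_iff[OF dual_cone_generated[OF V_rep]] matrix_vector_mult_scaleR)
  show ?thesis
    using primal dual semi_measure_gauge_le_iff[OF H_rep V_rep e_int metzler]
      semi_measure_dual_gauge_le_iff[OF H_rep V_rep e_int metzler]
    by blast
qed

end
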